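(* Let $d\ge1$ and let $\Lambda_1,\dots,\Lambda_d\subset\mathbb{N}$ be arbitrary infinite lacunary sets. Then there exists a function $\psi=(\psi_i)_{1\le i\le d}\in H^2(\mathbb{D},\mathbb{C}^d)$, cyclic for $S^*$, such that $\sigma(\psi_i)=\Lambda_i$ for $1\le i\le d$.
   Context: $H^2(\mathbb{D},\mathbb{C}^d)=H^2\oplus\dots\oplus H^2$ with coordinate functions $\psi_i\in H^2$; $S^*$ acts coordinatewise as the scalar backward shift; $\psi$ is cyclic if the closed span of $\{S^{*n}\psi:n\ge0\}$ is all of $H^2(\mathbb{D},\mathbb{C}^d)$. $\sigma(g)=\{k:\hat g(k)\ne0\}$. A set $\{n_1<n_2<\dots\}$ is lacunary if $n_{k+1}/n_k\ge c>1$ for all $k$. *)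

theory Defs
  imports "HOL-Analysis.Analysis"
begin

text \<open>H^2 of the disc, identified (via Taylor coefficients) with square-summable
  complex sequences: g(z) = sum_n g n * z^n.\<close>
definition H2 :: "(nat \<Rightarrow> complex) \<Rightarrow> bool" where
  "H2 g \<longleftrightarrow> summable (\<lambda>n. (cmod (g n))\<^sup>2)"

definition H2vec :: "nat \<Rightarrow> (nat \<Rightarrow> nat \<Rightarrow> complex) \<Rightarrow> bool" where
  "H2vec d \<psi> \<longleftrightarrow> (\<forall>i<d. H2 (\<psi> i))"

definition bshift :: "(nat \<Rightarrow> complex) \<Rightarrow> (nat \<Rightarrow> complex)" where
  "bshift g = (\<lambda>m. g (Suc m))"

definition H2vec_normsq :: "nat \<Rightarrow> (nat \<Rightarrow> nat \<Rightarrow> complex) \<Rightarrow> real" where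
  "H2vec_normsq d f = (\<Sum>i<d. \<Sum>m. (cmod (f i m))\<^sup>2)"

definition Sstar_cyclic :: "nat \<Rightarrow> (nat \<Rightarrow> nat \<Rightarrow> complex) \<Rightarrow> bool" where
  "Sstar_cyclic d \<psi> \<longleftrightarrow>
     (\<forall>f. H2vec d f \<longrightarrow> (\<forall>\<epsilon>>0. \<exists>N (c :: nat \<Rightarrow> complex).
        H2vec_normsq d (\<lambda>i. \<lambda>m. f i m - (\<Sum>k<N. c k * (bshift ^^ k) (\<psi> i) m)) < \<epsilon>))"

definition spec :: "(nat \<Rightarrow> complex) \<Rightarrow> nat set" where
  "spec g = {k. g k \<noteq> 0}"

definition lacunary :: "nat set \<Rightarrow> bool" where
  "lacunary \<Lambda> \<longleftrightarrow>
     (\<exists>c::real. c > 1 \<and> (\<forall>k. real (enumerate \<Lambda> (Suc k)) / real (enumerate \<Lambda> k) \<ge> c))"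

end

theory Submission
  imports Defs
begin

(* Put psi_i(n) = 2^(-(i+1) n^2) for n in Lambda_i and psi_i(n) = 0 otherwise, so
   that sigma(psi_i) = Lambda_i.  Call x approximable if it lies in the closed span of the
   shifts S^{*k} psi; this set is closed under sums, scalar multiples, S^* and norm limits, and
   psi is cyclic as soon as every unit vector e_{j,p} (coefficient 1 at position p of coordinate j)
   is approximable, because every f is a norm limit of finite combinations of unit vectors.
   Let Psi_j be psi with coordinates 0..j-1 set to zero; Psi_0 = psi is approximable.  If Psi_j
   is, pick u in Lambda_j so large that no element of Lambda_j lies in [u-p, u) -- possible since
   lacunary sets have unbounded gaps.  Then 2^((j+1)u^2) S^{*(u-p)} Psi_j is e_{j,p} up to an
   arbitrarily small error, because the weights in the coordinates i >= j decay much faster than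
   the chosen normalisation.  Hence all e_{j,p} are approximable, so is the coordinate psi_j, and
   therefore Psi_{j+1} = Psi_j - psi_j e_j.  After d steps all unit vectors are approximable.
   The file develops: norm bookkeeping in H^2(D,C^d); the approximable vectors and their closure
   properties; the gap property of lacunary sets; the weight estimates; the induction. *)

section \<open>The squared norm on H^2(D,C^d)\<close>

lemma H2vec_dominated:
  assumes "\<And>i m. i < d \<Longrightarrow> (cmod (x i m))\<^sup>2 \<le> b i m" and "\<And>i. i < d \<Longrightarrow> summable (b i)"
  shows "H2vec d x"
  unfolding H2vec_def H2_def
proof (intro allI impI)
  fix i assume "i < d"
  show "summable (\<lambda>m. (cmod (x i m))\<^sup>2)"
    by (rule summable_comparison_test'[OF assms(2)[OF \<open>i < d\<close>], of 0]) (use assms(1) \<open>i < d\<close> in auto)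
qed

lemma normsq_dominated:
  assumes "\<And>i m. i < d \<Longrightarrow> (cmod (x i m))\<^sup>2 \<le> b i m" and "\<And>i. i < d \<Longrightarrow> summable (b i)"
  shows "H2vec_normsq d x \<le> (\<Sum>i<d. suminf (b i))"
proof -
  have "summable (\<lambda>m. (cmod (x i m))\<^sup>2)" if "i < d" for i
    using H2vec_dominated[of d x b, OF assms] that unfolding H2vec_def H2_def by blast
  then show ?thesis
    unfolding H2vec_normsq_def using assms by (intro sum_mono suminf_le) auto
qed

lemma normsq_cong:
  "(\<And>i m. i < d \<Longrightarrow> x i m = y i m) \<Longrightarrow> H2vec_normsq d x = H2vec_normsq d y"
  unfolding H2vec_normsq_def by auto

lemma H2vec_scale: "H2vec d x \<Longrightarrow> H2vec d (\<lambda>i m. a * x i m)"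
  unfolding H2vec_def H2_def by (auto simp: norm_mult power_mult_distrib intro!: summable_mult)

lemma normsq_scale:
  "H2vec d x \<Longrightarrow> H2vec_normsq d (\<lambda>i m. a * x i m) = (cmod a)\<^sup>2 * H2vec_normsq d x"
  unfolding H2vec_normsq_def H2vec_def H2_def
  by (simp add: norm_mult power_mult_distrib suminf_mult sum_distrib_left)

text \<open>The parallelogram-type bound |a + b|^2 <= 2|a|^2 + 2|b|^2, which replaces the triangle
  inequality for the squared norm.\<close>
lemma cmod_add_sq_le: "(cmod (a + b))\<^sup>2 \<le> 2 * (cmod a)\<^sup>2 + 2 * (cmod b)\<^sup>2"
proof -
  have "(cmod (a + b))\<^sup>2 \<le> (cmod a + cmod b)\<^sup>2"
    by (simp add: power_mono norm_triangle_ineq)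
  also have "\<dots> \<le> 2 * (cmod a)\<^sup>2 + 2 * (cmod b)\<^sup>2"
    using zero_le_power2[of "cmod a - cmod b"] unfolding power2_sum power2_diff by linarith
  finally show ?thesis .
qed

lemma H2vec_add: "H2vec d x \<Longrightarrow> H2vec d y \<Longrightarrow> H2vec d (\<lambda>i m. x i m + y i m)"
  by (rule H2vec_dominated[of d _ "\<lambda>i m. 2 * (cmod (x i m))\<^sup>2 + 2 * (cmod (y i m))\<^sup>2"])
    (auto simp: H2vec_def H2_def cmod_add_sq_le intro!: summable_add summable_mult)

lemma H2vec_diff: "H2vec d x \<Longrightarrow> H2vec d y \<Longrightarrow> H2vec d (\<lambda>i m. x i m - y i m)"
  using H2vec_add[OF _ H2vec_scale[of d y "-1"], of x] by simp

lemma normsq_add_le: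
  assumes "H2vec d x" "H2vec d y"
  shows "H2vec_normsq d (\<lambda>i m. x i m + y i m) \<le> 2 * H2vec_normsq d x + 2 * H2vec_normsq d y"
proof -
  let ?b = "\<lambda>i m. 2 * (cmod (x i m))\<^sup>2 + 2 * (cmod (y i m))\<^sup>2"
  have sx: "summable (\<lambda>m. (cmod (x i m))\<^sup>2)" and sy: "summable (\<lambda>m. (cmod (y i m))\<^sup>2)"
    if "i < d" for i
    using assms that unfolding H2vec_def H2_def by auto
  have "H2vec_normsq d (\<lambda>i m. x i m + y i m) \<le> (\<Sum>i<d. suminf (?b i))"
    by (rule normsq_dominated[OF cmod_add_sq_le]) (auto intro!: summable_add summable_mult sx sy)
  also have "\<dots> = (\<Sum>i<d. 2 * (\<Sum>m. (cmod (x i m))\<^sup>2) + 2 * (\<Sum>m. (cmod (y i m))\<^sup>2))"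
    using sx sy by (intro sum.cong refl)
      (simp add: suminf_add[symmetric] suminf_mult summable_mult)
  also have "\<dots> = 2 * H2vec_normsq d x + 2 * H2vec_normsq d y"
    unfolding H2vec_normsq_def by (simp add: sum.distrib sum_distrib_left)
  finally show ?thesis .
qed

lemma H2vec_shift: "H2vec d x \<Longrightarrow> H2vec d (\<lambda>i m. x i (m + s))"
  unfolding H2vec_def H2_def by (auto simp: summable_iff_shift[where f="\<lambda>m. (cmod (x _ m))\<^sup>2"])

lemma normsq_shift1_le: "H2vec d x \<Longrightarrow> H2vec_normsq d (\<lambda>i m. x i (Suc m)) \<le> H2vec_normsq d x"
  unfolding H2vec_normsq_def H2vec_def H2_def
  by (intro sum_mono) (subst suminf_split_head, auto)

lemma H2vec_sum:
  "(\<And>k. k \<in> A \<Longrightarrow> H2vec d (x k)) \<Longrightarrow> H2vec d (\<lambda>i m. \<Sum>k\<in>A. x k i m)"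
proof (induction A rule: infinite_finite_induct)
  case (insert a A)
  then show ?case using H2vec_add[of d "x a" "\<lambda>i m. \<Sum>k\<in>A. x k i m"] by simp
qed (simp_all add: H2vec_def H2_def)

definition single_coord :: "nat \<Rightarrow> (nat \<Rightarrow> complex) \<Rightarrow> nat \<Rightarrow> nat \<Rightarrow> complex" where
  "single_coord j g = (\<lambda>i m. if i = j then g m else 0)"

definition unit_vec :: "nat \<Rightarrow> nat \<Rightarrow> nat \<Rightarrow> nat \<Rightarrow> complex" where
  "unit_vec j p = (\<lambda>i m. if i = j \<and> m = p then 1 else 0)"

lemma H2vec_single_coord: "H2 g \<Longrightarrow> H2vec d (single_coord j g)"
  unfolding H2_def
  by (rule H2vec_dominated[of d _ "\<lambda>i m. (cmod (g m))\<^sup>2"]) (auto simp: single_coord_def)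

lemma H2vec_unit_vec: "H2vec d (unit_vec j p)"
  by (rule H2vec_dominated[of d _ "\<lambda>i m. if m = p then 1 else 0"]) (auto simp: unit_vec_def)

lemma summable_tail_small:
  fixes h :: "nat \<Rightarrow> real"
  assumes "summable h" "\<epsilon> > 0"
  obtains P where "summable (\<lambda>m. if P \<le> m then h m else 0)"
    and "(\<Sum>m. if P \<le> m then h m else 0) < \<epsilon>"
proof -
  obtain P where P: "norm ((\<Sum>i<P. h i) - suminf h) < \<epsilon>"
    using LIMSEQ_D[OF summable_LIMSEQ[OF assms(1)] assms(2)] by blast
  define g where "g = (\<lambda>m. if P \<le> m then h m else 0)"
  have shift_eq: "(\<lambda>n. g (n + P)) = (\<lambda>n. h (n + P))" unfolding g_def by auto
  have "summable g"
    using assms(1) summable_iff_shift[of g P] summable_iff_shift[of h P] shift_eq by simp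
  moreover have "suminf g = suminf h - (\<Sum>i<P. h i)"
    using suminf_split_initial_segment[OF \<open>summable g\<close>, of P]
      suminf_minus_initial_segment[OF assms(1), of P] shift_eq by (simp add: g_def)
  ultimately show ?thesis using that P unfolding g_def by auto
qed

section \<open>Vectors approximable by combinations of backward shifts\<close>

definition shift_comb :: "(nat \<Rightarrow> nat \<Rightarrow> complex) \<Rightarrow> nat \<Rightarrow> (nat \<Rightarrow> complex) \<Rightarrow> nat \<Rightarrow> nat \<Rightarrow> complex" where
  "shift_comb \<psi> N c = (\<lambda>i m. \<Sum>k<N. c k * \<psi> i (m + k))"

definition approximable :: "nat \<Rightarrow> (nat \<Rightarrow> nat \<Rightarrow> complex) \<Rightarrow> (nat \<Rightarrow> nat \<Rightarrow> complex) \<Rightarrow> bool" where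
  "approximable d \<psi> x \<longleftrightarrow>
     (\<forall>\<epsilon>>0. \<exists>N c. H2vec_normsq d (\<lambda>i m. x i m - shift_comb \<psi> N c i m) < \<epsilon>)"

lemma bshift_iterate: "(bshift ^^ k) g m = g (m + k)"
  by (induction k arbitrary: m) (simp_all add: bshift_def)

lemma Sstar_cyclic_iff: "Sstar_cyclic d \<psi> \<longleftrightarrow> (\<forall>f. H2vec d f \<longrightarrow> approximable d \<psi> f)"
  unfolding Sstar_cyclic_def approximable_def shift_comb_def bshift_iterate by simp

lemma approximable_cong:
  assumes "\<And>i m. i < d \<Longrightarrow> x i m = y i m"
  shows "approximable d \<psi> x = approximable d \<psi> y"
proof -
  have "H2vec_normsq d (\<lambda>i m. x i m - shift_comb \<psi> N c i m)
      = H2vec_normsq d (\<lambda>i m. y i m - shift_comb \<psi> N c i m)" for N c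
    by (rule normsq_cong) (simp add: assms)
  then show ?thesis unfolding approximable_def by simp
qed

lemma shift_comb_add:
  "shift_comb \<psi> N1 c1 i m + shift_comb \<psi> N2 c2 i m =
   shift_comb \<psi> (max N1 N2) (\<lambda>k. (if k < N1 then c1 k else 0) + (if k < N2 then c2 k else 0)) i m"
proof -
  have pad: "(\<Sum>k<N. f k) = (\<Sum>k<max N1 N2. if k < N then f k else 0)"
    if "N \<le> max N1 N2" for N and f :: "nat \<Rightarrow> complex"
    using that by (intro sum.mono_neutral_cong_left) auto
  show ?thesis
    unfolding shift_comb_def pad[of N1, OF max.cobounded1] pad[of N2, OF max.cobounded2]
      sum.distrib[symmetric]
    by (intro sum.cong) (auto simp: distrib_right)
qed

context
  fixes d :: nat and \<psi> :: "nat \<Rightarrow> nat \<Rightarrow> complex"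
  assumes H2vec_psi: "H2vec d \<psi>"
begin

lemma H2vec_shift_comb: "H2vec d (shift_comb \<psi> N c)"
  unfolding shift_comb_def by (intro H2vec_sum H2vec_scale H2vec_shift H2vec_psi)

lemma approximable_self: "approximable d \<psi> \<psi>"
  unfolding approximable_def
proof (intro allI impI exI)
  fix \<epsilon> :: real assume "\<epsilon> > 0"
  have "H2vec_normsq d (\<lambda>i m. \<psi> i m - shift_comb \<psi> 1 (\<lambda>k. 1) i m) = H2vec_normsq d (\<lambda>i m. 0)"
    by (rule normsq_cong) (simp add: shift_comb_def)
  then show "H2vec_normsq d (\<lambda>i m. \<psi> i m - shift_comb \<psi> 1 (\<lambda>k. 1) i m) < \<epsilon>"
    using \<open>\<epsilon> > 0\<close> by (simp add: H2vec_normsq_def)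
qed

lemma approximable_zero: "approximable d \<psi> (\<lambda>i m. 0)"
  unfolding approximable_def by (auto intro!: exI[of _ 0] simp: shift_comb_def H2vec_normsq_def)

lemma approximable_add:
  assumes "H2vec d x" "H2vec d y" "approximable d \<psi> x" "approximable d \<psi> y"
  shows "approximable d \<psi> (\<lambda>i m. x i m + y i m)"
  unfolding approximable_def
proof (intro allI impI)
  fix \<epsilon> :: real assume "\<epsilon> > 0"
  then obtain N1 c1 N2 c2
    where approx_x: "H2vec_normsq d (\<lambda>i m. x i m - shift_comb \<psi> N1 c1 i m) < \<epsilon>/4"
      and approx_y: "H2vec_normsq d (\<lambda>i m. y i m - shift_comb \<psi> N2 c2 i m) < \<epsilon>/4"
    using assms(3,4) unfolding approximable_def by (meson zero_less_divide_iff zero_less_numeral)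
  let ?c = "\<lambda>k. (if k < N1 then c1 k else 0) + (if k < N2 then c2 k else 0)"
  have "H2vec_normsq d (\<lambda>i m. x i m + y i m - shift_comb \<psi> (max N1 N2) ?c i m)
      = H2vec_normsq d (\<lambda>i m. (x i m - shift_comb \<psi> N1 c1 i m) + (y i m - shift_comb \<psi> N2 c2 i m))"
    by (rule normsq_cong) (simp add: shift_comb_add[symmetric])
  also have "\<dots> \<le> 2 * H2vec_normsq d (\<lambda>i m. x i m - shift_comb \<psi> N1 c1 i m)
                  + 2 * H2vec_normsq d (\<lambda>i m. y i m - shift_comb \<psi> N2 c2 i m)"
    using assms(1,2) by (intro normsq_add_le H2vec_diff H2vec_shift_comb)
  also have "\<dots> < \<epsilon>" using approx_x approx_y by simp
  finally show "\<exists>N c. H2vec_normsq d (\<lambda>i m. x i m + y i m - shift_comb \<psi> N c i m) < \<epsilon>" by blast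
qed

lemma approximable_scale:
  assumes "H2vec d x" "approximable d \<psi> x"
  shows "approximable d \<psi> (\<lambda>i m. a * x i m)"
  unfolding approximable_def
proof (intro allI impI)
  fix \<epsilon> :: real assume "\<epsilon> > 0"
  define C where "C = (cmod a)\<^sup>2 + 1"
  have "C > 0" unfolding C_def by (simp add: add_nonneg_pos)
  then have "\<epsilon> / C > 0" using \<open>\<epsilon> > 0\<close> by simp
  then obtain N c where approx: "H2vec_normsq d (\<lambda>i m. x i m - shift_comb \<psi> N c i m) < \<epsilon> / C"
    using assms(2) unfolding approximable_def by blast
  have "H2vec_normsq d (\<lambda>i m. a * x i m - shift_comb \<psi> N (\<lambda>k. a * c k) i m)
      = H2vec_normsq d (\<lambda>i m. a * (x i m - shift_comb \<psi> N c i m))"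
    by (rule normsq_cong) (simp add: shift_comb_def sum_distrib_left algebra_simps)
  also have "\<dots> = (cmod a)\<^sup>2 * H2vec_normsq d (\<lambda>i m. x i m - shift_comb \<psi> N c i m)"
    using assms(1) by (intro normsq_scale H2vec_diff H2vec_shift_comb)
  also have "\<dots> \<le> (cmod a)\<^sup>2 * (\<epsilon> / C)"
    using approx by (intro mult_left_mono) auto
  also have "\<dots> < \<epsilon>" using \<open>\<epsilon> > 0\<close> \<open>C > 0\<close> by (simp add: C_def field_simps)
  finally show "\<exists>N c. H2vec_normsq d (\<lambda>i m. a * x i m - shift_comb \<psi> N c i m) < \<epsilon>" by blast
qed

lemma approximable_limit:
  assumes "H2vec d x"
    and "\<And>\<epsilon>. \<epsilon> > 0 \<Longrightarrow> \<exists>y. H2vec d y \<and> approximable d \<psi> y \<and> H2vec_normsq d (\<lambda>i m. x i m - y i m) < \<epsilon>"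
  shows "approximable d \<psi> x"
  unfolding approximable_def
proof (intro allI impI)
  fix \<epsilon> :: real assume "\<epsilon> > 0"
  then obtain y where y: "H2vec d y" "approximable d \<psi> y"
      "H2vec_normsq d (\<lambda>i m. x i m - y i m) < \<epsilon>/4"
    using assms(2)[of "\<epsilon>/4"] by auto
  obtain N c where approx: "H2vec_normsq d (\<lambda>i m. y i m - shift_comb \<psi> N c i m) < \<epsilon>/4"
    using y(2) \<open>\<epsilon> > 0\<close> unfolding approximable_def by (meson zero_less_divide_iff zero_less_numeral)
  have "H2vec_normsq d (\<lambda>i m. x i m - shift_comb \<psi> N c i m)
      = H2vec_normsq d (\<lambda>i m. (x i m - y i m) + (y i m - shift_comb \<psi> N c i m))"
    by (rule normsq_cong) simp
  also have "\<dots> \<le> 2 * H2vec_normsq d (\<lambda>i m. x i m - y i m)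
                  + 2 * H2vec_normsq d (\<lambda>i m. y i m - shift_comb \<psi> N c i m)"
    using assms(1) y(1) by (intro normsq_add_le H2vec_diff H2vec_shift_comb)
  also have "\<dots> < \<epsilon>" using approx y(3) by simp
  finally show "\<exists>N c. H2vec_normsq d (\<lambda>i m. x i m - shift_comb \<psi> N c i m) < \<epsilon>" by blast
qed

lemma approximable_shift1:
  assumes "H2vec d x" "approximable d \<psi> x"
  shows "approximable d \<psi> (\<lambda>i m. x i (Suc m))"
  unfolding approximable_def
proof (intro allI impI)
  fix \<epsilon> :: real assume "\<epsilon> > 0"
  then obtain N c where approx: "H2vec_normsq d (\<lambda>i m. x i m - shift_comb \<psi> N c i m) < \<epsilon>"
    using assms(2) unfolding approximable_def by blast
  let ?c = "\<lambda>k. if k = 0 then 0 else c (k - 1)"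
  have comb_eq: "shift_comb \<psi> (Suc N) ?c i m = shift_comb \<psi> N c i (Suc m)" for i m
    unfolding shift_comb_def sum.lessThan_Suc_shift by simp
  have "H2vec_normsq d (\<lambda>i m. x i (Suc m) - shift_comb \<psi> (Suc N) ?c i m)
      = H2vec_normsq d (\<lambda>i m. (\<lambda>i m. x i m - shift_comb \<psi> N c i m) i (Suc m))"
    by (rule normsq_cong) (simp add: comb_eq)
  also have "\<dots> \<le> H2vec_normsq d (\<lambda>i m. x i m - shift_comb \<psi> N c i m)"
    using assms(1) by (intro normsq_shift1_le H2vec_diff H2vec_shift_comb)
  finally show "\<exists>N c. H2vec_normsq d (\<lambda>i m. x i (Suc m) - shift_comb \<psi> N c i m) < \<epsilon>"
    using approx by (meson le_less_trans)
qed

lemma approximable_shift: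
  assumes "H2vec d x" "approximable d \<psi> x"
  shows "approximable d \<psi> (\<lambda>i m. x i (m + s))"
proof (induction s)
  case (Suc s)
  then show ?case using approximable_shift1[OF H2vec_shift[OF assms(1)], of s] by simp
qed (use assms in simp)

lemma approximable_sum:
  assumes "finite A" "\<And>k. k \<in> A \<Longrightarrow> H2vec d (x k) \<and> approximable d \<psi> (x k)"
  shows "approximable d \<psi> (\<lambda>i m. \<Sum>k\<in>A. x k i m)"
  using assms
proof (induction A rule: finite_induct)
  case (insert a A)
  then show ?case
    using approximable_add[of "x a" "\<lambda>i m. \<Sum>k\<in>A. x k i m"] H2vec_sum[of A d x] by simp
qed (simp add: approximable_zero)

text \<open>If all unit vectors of coordinate j are approximable, then so is every vector supported on
  coordinate j: its truncations are finite combinations of unit vectors and converge to it.\<close>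
lemma approximable_single_coord:
  assumes units: "\<And>p. approximable d \<psi> (unit_vec j p)" and "H2 g"
  shows "approximable d \<psi> (single_coord j g)"
proof (rule approximable_limit[OF H2vec_single_coord[OF \<open>H2 g\<close>]])
  fix \<epsilon> :: real assume "\<epsilon> > 0"
  obtain P where tail: "summable (\<lambda>m. if P \<le> m then (cmod (g m))\<^sup>2 else 0)"
      "(\<Sum>m. if P \<le> m then (cmod (g m))\<^sup>2 else 0) < \<epsilon>"
    using summable_tail_small[OF \<open>H2 g\<close>[unfolded H2_def] \<open>\<epsilon> > 0\<close>] by blast
  define y where "y = (\<lambda>i m. \<Sum>q<P. g q * unit_vec j q i m)"
  have y_H2: "H2vec d y" unfolding y_def by (intro H2vec_sum H2vec_scale H2vec_unit_vec)
  have y_approx: "approximable d \<psi> y"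
    unfolding y_def by (intro approximable_sum conjI H2vec_scale approximable_scale
        H2vec_unit_vec units finite_lessThan)
  have y_eq: "y i m = (if i = j \<and> m < P then g m else 0)" for i m
    unfolding y_def unit_vec_def by (auto simp: if_distrib cong: if_cong)
  define b where "b = (\<lambda>i m. if i = j \<and> P \<le> m then (cmod (g m))\<^sup>2 else 0)"
  have "H2vec_normsq d (\<lambda>i m. single_coord j g i m - y i m) \<le> (\<Sum>i<d. suminf (b i))"
  proof (rule normsq_dominated)
    show "(cmod (single_coord j g i m - y i m))\<^sup>2 \<le> b i m" for i m
      by (simp add: b_def y_eq single_coord_def)
    show "summable (b i)" for i
      using tail(1) by (cases "i = j") (simp_all add: b_def)
  qed
  also have "\<dots> = (\<Sum>i<d. if i = j then (\<Sum>m. if P \<le> m then (cmod (g m))\<^sup>2 else 0) else 0)"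
    by (intro sum.cong) (auto simp: b_def)
  also have "\<dots> \<le> (\<Sum>m. if P \<le> m then (cmod (g m))\<^sup>2 else 0)"
    using suminf_nonneg[OF tail(1)] by simp
  finally show "\<exists>y. H2vec d y \<and> approximable d \<psi> y \<and> H2vec_normsq d (\<lambda>i m. single_coord j g i m - y i m) < \<epsilon>"
    using y_H2 y_approx tail(2) by (meson le_less_trans)
qed

lemma cyclic_if_unit_vecs:
  assumes "\<And>j p. j < d \<Longrightarrow> approximable d \<psi> (unit_vec j p)"
  shows "Sstar_cyclic d \<psi>"
  unfolding Sstar_cyclic_iff
proof (intro allI impI)
  fix f assume f: "H2vec d f"
  then have coords: "H2 (f j)" if "j < d" for j using that unfolding H2vec_def by blast
  have "approximable d \<psi> (\<lambda>i m. \<Sum>j<d. single_coord j (f j) i m)"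
    using assms coords by (intro approximable_sum conjI finite_lessThan H2vec_single_coord
        approximable_single_coord) auto
  moreover have "approximable d \<psi> f = approximable d \<psi> (\<lambda>i m. \<Sum>j<d. single_coord j (f j) i m)"
    by (rule approximable_cong) (simp add: single_coord_def)
  ultimately show "approximable d \<psi> f" by simp
qed

end

section \<open>Lacunary sets have unbounded gaps\<close>

lemma le_enumerate_of_less_enumerate_Suc:
  fixes S :: "nat set"
  assumes "infinite S" "n \<in> S" "n < enumerate S (Suc k)"
  shows "n \<le> enumerate S k"
proof -
  obtain q where q: "enumerate S q = n" using enumerate_Ex[OF assms(1,2)] by blast
  then have "enumerate S q < enumerate S (Suc k)" using assms(3) by simp
  then have "q < Suc k" using enumerate_mono_iff[OF assms(1)] by simp
  then show ?thesis using q assms(1) by (metis less_Suc_eq_le enumerate_mono_le_iff)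
qed

text \<open>Above any bound there is an element u of a lacunary set such that the set has no element in
  [u - p, u): consecutive elements n_k < n_{k+1} satisfy n_{k+1} - n_k >= (c - 1) n_k.\<close>
lemma lacunary_large_gap:
  assumes "infinite \<Lambda>" "lacunary \<Lambda>"
  obtains u where "u \<in> \<Lambda>" "B \<le> u" "\<And>n. n \<in> \<Lambda> \<Longrightarrow> n < u \<Longrightarrow> n + p < u"
proof -
  obtain c :: real where c: "c > 1" "\<And>k. real (enumerate \<Lambda> (Suc k)) / real (enumerate \<Lambda> k) \<ge> c"
    using assms(2) unfolding lacunary_def by auto
  define K where "K = real p * c / (c - 1) + real B"
  define k where "k = nat \<lceil>K\<rceil>"
  define u where "u = enumerate \<Lambda> (Suc k)"
  have "Suc k \<le> u" unfolding u_def by (rule le_enumerate[OF assms(1)])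
  moreover have "K \<le> real k" unfolding k_def by (rule real_nat_ceiling_ge)
  ultimately have "real u > K" by linarith
  moreover have "real p * c / (c - 1) \<ge> 0" using c by simp
  ultimately have "B \<le> u" and "real p * c / (c - 1) < real u" unfolding K_def by linarith+
  then have p_small: "real p * c < real u * (c - 1)" using c(1) by (simp add: pos_divide_less_eq)
  have "real (enumerate \<Lambda> k) > 0"
    using c(1) c(2)[of k] by (cases "enumerate \<Lambda> k = 0") auto
  then have ratio: "real (enumerate \<Lambda> k) * c \<le> real u"
    using c(2)[of k] unfolding u_def by (simp add: pos_le_divide_eq mult.commute)
  have "n + p < u" if "n \<in> \<Lambda>" "n < u" for n
  proof -
    have "n \<le> enumerate \<Lambda> k"
      using le_enumerate_of_less_enumerate_Suc[OF assms(1) that(1)] that(2) unfolding u_def by blast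
    then have "real n * c \<le> real (enumerate \<Lambda> k) * c" using c(1) by simp
    then have "(real n + real p) * c < real u * c" using ratio p_small by (simp add: algebra_simps)
    then show ?thesis using c(1) by simp
  qed
  then show ?thesis using that[of u] \<open>B \<le> u\<close> enumerate_in_set[OF assms(1)] unfolding u_def by blast
qed

section \<open>The cyclic vector\<close>

definition weight :: "nat \<Rightarrow> nat \<Rightarrow> real" where
  "weight i n = (1/2)^((i+1)*n\<^sup>2)"

definition psi_lac :: "(nat \<Rightarrow> nat set) \<Rightarrow> nat \<Rightarrow> nat \<Rightarrow> complex" where
  "psi_lac \<Lambda> i n = (if n \<in> \<Lambda> i then complex_of_real (weight i n) else 0)"

definition psi_from :: "(nat \<Rightarrow> nat set) \<Rightarrow> nat \<Rightarrow> nat \<Rightarrow> nat \<Rightarrow> complex" where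
  "psi_from \<Lambda> j = (\<lambda>i m. if i < j then 0 else psi_lac \<Lambda> i m)"

lemma weight_pos: "weight i n > 0"
  unfolding weight_def by simp

lemma weight_sq: "(weight i n)\<^sup>2 = (1/2)^(2*(i+1)*n\<^sup>2)"
proof -
  have "((1/2::real)^((i+1)*n\<^sup>2))\<^sup>2 = (1/2)^((i+1)*n\<^sup>2*2)" by (rule power_mult[symmetric])
  also have "(i+1)*n\<^sup>2*2 = 2*(i+1)*n\<^sup>2" by simp
  finally show ?thesis by (simp add: weight_def)
qed

lemma psi_lac_sq_le: "(cmod (psi_lac \<Lambda> i m))\<^sup>2 \<le> (1/2)^m"
proof -
  have "m \<le> m*m" by (cases m) auto
  also have "\<dots> \<le> 2*(i+1)*m\<^sup>2" by (simp add: power2_eq_square)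
  finally have "(weight i m)\<^sup>2 \<le> (1/2)^m" unfolding weight_sq by (intro power_decreasing) auto
  then show ?thesis unfolding psi_lac_def using weight_pos[of i m] by auto
qed

lemma H2_psi_lac: "H2 (psi_lac \<Lambda> i)"
  unfolding H2_def by (rule summable_comparison_test'[of "\<lambda>m. (1/2::real)^m" 0])
    (simp_all add: psi_lac_sq_le)

lemma H2vec_psi_lac: "H2vec d (psi_lac \<Lambda>)"
  using H2_psi_lac unfolding H2vec_def by blast

lemma H2vec_psi_from: "H2vec d (psi_from \<Lambda> j)"
  unfolding H2vec_def
proof (intro allI impI)
  fix i show "H2 (psi_from \<Lambda> j i)"
    using H2_psi_lac[of \<Lambda> i] by (cases "i < j") (simp_all add: psi_from_def H2_def)
qed

lemma spec_psi_lac: "spec (psi_lac \<Lambda> i) = \<Lambda> i"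
  unfolding spec_def psi_lac_def using weight_pos[of i] by (auto simp: less_le)

text \<open>The exponent estimates behind the choice of weights: for u large compared with p, the
  entry at distance m beyond u - p, in coordinate j (beyond u) or in a later coordinate, is
  smaller than the normalising weight of u by a factor 2^-(L+m) (after squaring).\<close>
lemma exponent_gap_same_coord:
  fixes u m p L j :: nat
  assumes "p < m" "L \<le> u" "p \<le> u"
  shows "2*(j+1)*u\<^sup>2 + L + m \<le> 2*(j+1)*(m + (u - p))\<^sup>2"
proof -
  define n where "n = m + (u - p)"
  have n: "u + 1 \<le> n" "m \<le> n" using assms unfolding n_def by auto
  have "n * (u + 1) \<le> n * n" using n by (intro mult_le_mono2)
  moreover have "(u + 1) * u \<le> n * u" using n by (intro mult_le_mono1)
  ultimately have "u*u + u + n \<le> n*n" by (simp add: algebra_simps)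
  then have "2*(j+1)*(u*u) + (u + n) \<le> 2*(j+1)*(n*n)"
    using mult_le_mono2[of "u*u + u + n" "n*n" "2*(j+1)"] by (simp add: algebra_simps)
  then show ?thesis using n assms unfolding n_def[symmetric] power2_eq_square by linarith
qed

text \<open>Here v = u - p; the surplus factor 2^(2n^2) of a later coordinate absorbs the loss from n < u.\<close>
lemma exponent_gap_later_coord:
  fixes v m p L j i :: nat
  assumes "j < i" "2*(j+1)*(2*p+p*p) + L + 1 \<le> v"
  shows "2*(j+1)*(v+p)\<^sup>2 + L + m \<le> 2*(i+1)*(m+v)\<^sup>2"
proof -
  define A where "A = 2*(j+1)*(2*p+p*p) + L + 1"
  have "1 \<le> v" using assms unfolding A_def by simp
  have mixed_terms: "2*(j+1)*(2*p * v + p*p) + L \<le> v * v"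
  proof -
    have "2*(j+1)*(2*p * v + p*p) \<le> 2*(j+1)*(2*p * v + p*p * v)"
      using \<open>1 \<le> v\<close> by (intro mult_le_mono2) simp
    moreover have "L \<le> L * v" using \<open>1 \<le> v\<close> by simp
    moreover have "A * v = 2*(j+1)*(2*p * v + p*p * v) + L * v + v"
      unfolding A_def by (simp add: algebra_simps)
    moreover have "A * v \<le> v * v" using assms(2) unfolding A_def by (intro mult_le_mono1)
    ultimately show ?thesis by linarith
  qed
  have square_growth: "v * v + m \<le> (m+v)*(m+v)"
  proof -
    have "m \<le> m * v" using \<open>1 \<le> v\<close> by simp
    moreover have "(m+v)*(m+v) = v * v + m*m + 2*(m * v)" by (simp add: algebra_simps)
    ultimately show ?thesis by linarith
  qed
  have "2*(j+1)*(v+p)\<^sup>2 + L + m = 2*(j+1)*(v * v) + (2*(j+1)*(2*p * v + p*p) + L) + m"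
    by (simp add: power2_eq_square algebra_simps)
  also have "\<dots> \<le> 2*(j+1)*(v * v) + 2*(v * v + m)" using mixed_terms by simp
  also have "\<dots> \<le> 2*(j+1)*((m+v)*(m+v)) + 2*((m+v)*(m+v))"
    using square_growth by (intro add_mono mult_le_mono2) (auto intro: mult_le_mono)
  also have "\<dots> = 2*(j+2)*(m+v)\<^sup>2" by (simp add: power2_eq_square algebra_simps)
  also have "\<dots> \<le> 2*(i+1)*(m+v)\<^sup>2" using assms(1) by (intro mult_le_mono1) auto
  finally show ?thesis .
qed

lemma weight_ratio_sq_le:
  assumes "2*(j+1)*u\<^sup>2 + (L + m) \<le> 2*(i+1)*n\<^sup>2"
  shows "(cmod (complex_of_real (1 / weight j u) * complex_of_real (weight i n)))\<^sup>2
           \<le> (1/2)^L * (1/2::real)^m"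
proof -
  have "(cmod (complex_of_real (1 / weight j u) * complex_of_real (weight i n)))\<^sup>2
      = (1/2)^(2*(i+1)*n\<^sup>2) / (1/2)^(2*(j+1)*u\<^sup>2)"
    using weight_pos[of j u] weight_pos[of i n] by (simp add: norm_divide power_divide weight_sq)
  also have "\<dots> = (1/2)^(2*(i+1)*n\<^sup>2 - 2*(j+1)*u\<^sup>2)"
    using assms by (simp add: power_diff)
  also have "\<dots> \<le> (1/2)^(L + m)" using assms by (intro power_decreasing) auto
  finally show ?thesis by (simp add: power_add)
qed

text \<open>Pointwise error of the normalised shift 2^((j+1)u^2) S^{*(u-p)} Psi_j against e_{j,p},
  when u in Lambda_j is large and preceded by a gap longer than p.\<close>
lemma normalized_shift_error:
  assumes u: "u \<in> \<Lambda> j" and gap: "\<And>n. n \<in> \<Lambda> j \<Longrightarrow> n < u \<Longrightarrow> n + p < u"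
    and big: "p + (2*(j+1)*(2*p+p*p) + L + 1) \<le> u"
  shows "(cmod (unit_vec j p i m - complex_of_real (1 / weight j u) * psi_from \<Lambda> j i (m + (u - p))))\<^sup>2
          \<le> (1/2)^L * (1/2::real)^m"
proof -
  define n where "n = m + (u - p)"
  consider "i < j" | "i = j" "m = p" | "i = j" "m < p" | "i = j \<and> p < m \<or> j < i"
    by linarith
  then show ?thesis
  proof cases
    case 2
    then have "n = u" using big unfolding n_def by simp
    then show ?thesis
      using 2 u weight_pos[of j u] unfolding unit_vec_def psi_from_def psi_lac_def n_def[symmetric]
      by simp
  next
    case 3
    then have "n \<notin> \<Lambda> j" using gap big unfolding n_def by force
    then show ?thesis using 3 unfolding unit_vec_def psi_from_def psi_lac_def n_def[symmetric] by simp
  next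
    case 4
    have exponents: "2*(j+1)*u\<^sup>2 + (L + m) \<le> 2*(i+1)*n\<^sup>2"
    proof (cases "j < i")
      case True
      have "2*(j+1)*((u - p)+p)\<^sup>2 + L + m \<le> 2*(i+1)*(m+(u - p))\<^sup>2"
        by (rule exponent_gap_later_coord[OF True]) (use big in linarith)
      then show ?thesis using big unfolding n_def by simp
    next
      case False
      then have "i = j" "p < m" using 4 by auto
      then show ?thesis
        using exponent_gap_same_coord[of p m L u j] big unfolding n_def by simp
    qed
    have entry: "unit_vec j p i m - complex_of_real (1 / weight j u) * psi_from \<Lambda> j i (m + (u - p))
        = - (complex_of_real (1 / weight j u) * psi_lac \<Lambda> i n)"
      using 4 unfolding unit_vec_def psi_from_def n_def by auto
    show ?thesis
    proof (cases "n \<in> \<Lambda> i")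
      case True
      then show ?thesis
        using weight_ratio_sq_le[OF exponents] unfolding entry psi_lac_def
        by (simp only: norm_minus_cancel if_True)
    next
      case False
      then show ?thesis unfolding entry psi_lac_def by simp
    qed
  qed (simp add: unit_vec_def psi_from_def)
qed

section \<open>Peeling off the coordinates\<close>

lemma unit_vec_approximable:
  assumes "infinite (\<Lambda> j)" "lacunary (\<Lambda> j)"
    and Psi_j: "approximable d (psi_lac \<Lambda>) (psi_from \<Lambda> j)"
  shows "approximable d (psi_lac \<Lambda>) (unit_vec j p)"
proof (rule approximable_limit[OF H2vec_psi_lac H2vec_unit_vec])
  fix \<epsilon> :: real assume "\<epsilon> > 0"
  then obtain L where L: "(1/2::real)^L < \<epsilon> / (2 * real d + 1)"
    using real_arch_pow_inv[of "\<epsilon> / (2 * real d + 1)" "1/2"] by auto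
  obtain u where u: "u \<in> \<Lambda> j" "p + (2*(j+1)*(2*p+p*p) + L + 1) \<le> u"
      and gap: "\<And>n. n \<in> \<Lambda> j \<Longrightarrow> n < u \<Longrightarrow> n + p < u"
    using lacunary_large_gap[OF assms(1,2)] by metis
  define y where "y = (\<lambda>i m. complex_of_real (1 / weight j u) * psi_from \<Lambda> j i (m + (u - p)))"
  have "H2vec d y" unfolding y_def by (rule H2vec_scale[OF H2vec_shift[OF H2vec_psi_from]])
  moreover have "approximable d (psi_lac \<Lambda>) y" unfolding y_def
    by (rule approximable_scale[OF H2vec_psi_lac H2vec_shift[OF H2vec_psi_from]
          approximable_shift[OF H2vec_psi_lac H2vec_psi_from Psi_j]])
  moreover have "H2vec_normsq d (\<lambda>i m. unit_vec j p i m - y i m) < \<epsilon>"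
  proof -
    have entries: "(cmod (unit_vec j p i m - y i m))\<^sup>2 \<le> (1/2)^L * (1/2::real)^m" for i m
      unfolding y_def by (rule normalized_shift_error) (fact u(1), fact gap, fact u(2))
    have "summable (\<lambda>m. (1/2)^L * (1/2::real)^m)"
      by (intro summable_mult summable_geometric) simp
    then have "H2vec_normsq d (\<lambda>i m. unit_vec j p i m - y i m) \<le> (\<Sum>i<d. \<Sum>m. (1/2)^L * (1/2::real)^m)"
      using entries by (intro normsq_dominated)
    also have "\<dots> = real d * (2 * (1/2)^L)"
    proof -
      have "(\<Sum>m. (1/2)^L * (1/2::real)^m) = 2 * (1/2)^L"
        by (subst suminf_mult) (simp_all add: suminf_geometric)
      then show ?thesis by simp
    qed
    also have "\<dots> \<le> (2 * real d + 1) * (1/2)^L" by simp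
    also have "\<dots> < \<epsilon>" using L by (simp add: pos_less_divide_eq mult.commute)
    finally show ?thesis .
  qed
  ultimately show "\<exists>y. H2vec d y \<and> approximable d (psi_lac \<Lambda>) y \<and> H2vec_normsq d (\<lambda>i m. unit_vec j p i m - y i m) < \<epsilon>"
    by blast
qed

lemma psi_from_Suc_approximable:
  assumes "infinite (\<Lambda> j)" "lacunary (\<Lambda> j)"
    and Psi_j: "approximable d (psi_lac \<Lambda>) (psi_from \<Lambda> j)"
  shows "approximable d (psi_lac \<Lambda>) (psi_from \<Lambda> (Suc j))"
proof -
  have coord: "approximable d (psi_lac \<Lambda>) (single_coord j (psi_lac \<Lambda> j))"
    by (rule approximable_single_coord[OF H2vec_psi_lac unit_vec_approximable[OF assms] H2_psi_lac])
  have peel: "psi_from \<Lambda> (Suc j) = (\<lambda>i m. psi_from \<Lambda> j i m + (-1) * single_coord j (psi_lac \<Lambda> j) i m)"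
    by (intro ext) (simp add: psi_from_def single_coord_def)
  have "approximable d (psi_lac \<Lambda>) (\<lambda>i m. psi_from \<Lambda> j i m + (-1) * single_coord j (psi_lac \<Lambda> j) i m)"
    by (rule approximable_add[OF H2vec_psi_lac H2vec_psi_from H2vec_scale[OF H2vec_single_coord[OF H2_psi_lac]]
          Psi_j approximable_scale[OF H2vec_psi_lac H2vec_single_coord[OF H2_psi_lac] coord]])
  then show ?thesis by (simp only: peel)
qed

theorem mainTheorem11:
  fixes d :: nat and \<Lambda> :: "nat \<Rightarrow> nat set"
  assumes "d \<ge> 1"
    and "\<And>i. i < d \<Longrightarrow> infinite (\<Lambda> i)"
    and "\<And>i. i < d \<Longrightarrow> lacunary (\<Lambda> i)"
  shows "\<exists>\<psi>. H2vec d \<psi> \<and> Sstar_cyclic d \<psi> \<and> (\<forall>i<d. spec (\<psi> i) = \<Lambda> i)"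
proof (intro exI conjI allI impI)
  show "H2vec d (psi_lac \<Lambda>)" by (rule H2vec_psi_lac)
  show "spec (psi_lac \<Lambda> i) = \<Lambda> i" for i
    by (rule spec_psi_lac)
  have Psi: "approximable d (psi_lac \<Lambda>) (psi_from \<Lambda> j)" if "j \<le> d" for j
    using that
  proof (induction j)
    case 0
    have "psi_from \<Lambda> 0 = psi_lac \<Lambda>" by (simp add: psi_from_def)
    then show ?case using approximable_self[OF H2vec_psi_lac] by simp
  next
    case (Suc j)
    then show ?case by (intro psi_from_Suc_approximable assms(2,3)) auto
  qed
  show "Sstar_cyclic d (psi_lac \<Lambda>)"
  proof (rule cyclic_if_unit_vecs[OF H2vec_psi_lac])
    fix j p assume "j < d"
    then show "approximable d (psi_lac \<Lambda>) (unit_vec j p)"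
      by (intro unit_vec_approximable assms(2,3) Psi) auto
  qed
qed

end
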